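(* Let $\alpha,\beta>0$, let $g(n)=c_0$ be constant, and let $x$ be a sequence (with given $x(1)$) satisfying $x(n)=\alpha\,x(\lfloor n/2\rfloor)+\beta\,x(\lceil n/2\rceil)+g(n)$ for $n\ge2$. Let $d_0\coloneqq(1-\beta)x(1)-g(1)+g(0)$ and $d_1\coloneqq g(1)-(1-\beta)x(1)$. Then, as $n\to\infty$, with a suitable $1$-periodic continuous function $\Phi$: (1) If $d_0=d_1=0$, then $x(n)=n^{\log_2(\alpha+\beta)}\Phi(\{\log_2n\})$ (exactly, with no error term). (2a) If $d_0\ne0$ or $d_1\ne0$, and $\alpha+\beta>1$, then for every $\varepsilon>0$, $x(n)=n^{\log_2(\alpha+\beta)}\Phi(\{\log_2n\})+O\big(n^{\log_2\max\{\alpha,\beta,1\}+[\max\{\alpha,\beta\}=1]\varepsilon}(\log n)^{[\max\{\alpha,\beta\}<1]}\big)$. (2b) If $d_0\ne0$ or $d_1\ne0$, and $\alpha+\beta\le1$, then $x(n)=O\big((\log n)^{[\alpha+\beta=1\text{ and }d_0+d_1\ne0]}\big)$.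
   Context: $\{z\}=z-\lfloor z\rfloor$ denotes the fractional part. Iverson's bracket: $[S]=1$ if $S$ is true and $0$ otherwise. Here $g(0)=g(1)=c_0$. *)

theory Defs
  imports "HOL-Analysis.Analysis" "HOL-Library.Landau_Symbols"
begin

definition rec_d0 :: "real \<Rightarrow> (nat \<Rightarrow> real) \<Rightarrow> real \<Rightarrow> real" where
  "rec_d0 \<beta> g x1 = (1 - \<beta>) * x1 - g 1 + g 0"

definition rec_d1 :: "real \<Rightarrow> (nat \<Rightarrow> real) \<Rightarrow> real \<Rightarrow> real" where
  "rec_d1 \<beta> g x1 = g 1 - (1 - \<beta>) * x1"

end

theory Submission
  imports Defs
begin

text \<open>
  For m \<ge> 1 the recurrence reads x(2m) = (\<alpha> + \<beta>) x(m) + c and x(2m+1) = \<alpha> x(m) + \<beta> x(m+1) + c,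
  so the increments \<Delta>(n) = x(n+1) - x(n) satisfy \<Delta>(2m) = \<beta> \<Delta>(m) and \<Delta>(2m+1) = \<alpha> \<Delta>(m).
  Hence \<Delta>(n) = \<Delta>(1) w(n), where w(n) is the product of a factor \<beta> for every binary digit 0 and
  a factor \<alpha> for every digit 1 of n below the leading one, and x(n) = x(1) + \<Delta>(1) S(n) with
  S(n) = w(0) + ... + w(n-1). These sums satisfy S(2n) = 1 + (\<alpha> + \<beta>) S(n).

  If \<alpha> + \<beta> > 1, then T = S + 1/(\<alpha> + \<beta> - 1) satisfies T(2n) = (\<alpha> + \<beta>) T(n), so the ratio
  T(n) / n^\<rho> with \<rho> = log2(\<alpha> + \<beta>) is invariant under doubling of n. Covering a short interval
  [n, m) by two aligned dyadic blocks, on which S grows by (\<alpha> + \<beta>)^i times a single weight, shows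
  that this ratio is uniformly continuous as a function of log2 n. It therefore extends from the
  dense set of numbers log2 n - k to a continuous 1-periodic function, and
  x(n) = n^\<rho> \<Phi>({log2 n}) - c/(\<alpha> + \<beta> - 1) holds exactly: the error term is a constant.
  If \<alpha> + \<beta> < 1 the sums S(n) are bounded by a geometric series, and if \<alpha> + \<beta> = 1 they are
  at most log2 n + 1.
\<close>

section \<open>Binary digit weights\<close>

fun bin_weight :: "real \<Rightarrow> real \<Rightarrow> nat \<Rightarrow> real" where
  "bin_weight a b n =
     (if n = 0 then 0 else if n = 1 then 1 else (if even n then b else a) * bin_weight a b (n div 2))"

declare bin_weight.simps [simp del]

definition bin_weight_sum :: "real \<Rightarrow> real \<Rightarrow> nat \<Rightarrow> real" where
  "bin_weight_sum a b n = (\<Sum>j<n. bin_weight a b j)"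

lemma bin_weight_0 [simp]: "bin_weight a b 0 = 0"
  and bin_weight_1 [simp]: "bin_weight a b (Suc 0) = 1"
  by (simp_all add: bin_weight.simps)

lemma bin_weight_even: "m \<ge> 1 \<Longrightarrow> bin_weight a b (2 * m) = b * bin_weight a b m"
  and bin_weight_odd: "m \<ge> 1 \<Longrightarrow> bin_weight a b (2 * m + 1) = a * bin_weight a b m"
  by (subst bin_weight.simps; simp)+

lemma bin_weight_pair:
  "m \<ge> 1 \<Longrightarrow> bin_weight a b (2 * m) + bin_weight a b (2 * m + 1) = (a + b) * bin_weight a b m"
  using bin_weight_even[of m a b] bin_weight_odd[of m a b] by (simp add: algebra_simps)

lemma bin_weight_nonneg: "a \<ge> 0 \<Longrightarrow> b \<ge> 0 \<Longrightarrow> bin_weight a b n \<ge> 0"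
  by (induction a b n rule: bin_weight.induct) (subst bin_weight.simps, auto)

lemma bin_weight_sum_Suc: "bin_weight_sum a b (Suc n) = bin_weight_sum a b n + bin_weight a b n"
  by (simp add: bin_weight_sum_def)

lemma bin_weight_sum_double:
  "m \<ge> 1 \<Longrightarrow> bin_weight_sum a b (2 * m) = 1 + (a + b) * bin_weight_sum a b m"
proof (induction m rule: dec_induct)
  case base
  show ?case by (simp add: bin_weight_sum_def numeral_2_eq_2)
next
  case (step k)
  have "bin_weight_sum a b (2 * Suc k)
      = bin_weight_sum a b (2 * k) + (bin_weight a b (2 * k) + bin_weight a b (2 * k + 1))"
    by (simp add: bin_weight_sum_Suc)
  with step bin_weight_pair[of k a b] show ?case
    by (simp add: bin_weight_sum_Suc algebra_simps)
qed

lemma bin_weight_sum_mono: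
  "a \<ge> 0 \<Longrightarrow> b \<ge> 0 \<Longrightarrow> n \<le> m \<Longrightarrow> bin_weight_sum a b n \<le> bin_weight_sum a b m"
  unfolding bin_weight_sum_def by (intro sum_mono2) (auto simp: bin_weight_nonneg)

lemma bin_weight_sum_nonneg: "a \<ge> 0 \<Longrightarrow> b \<ge> 0 \<Longrightarrow> bin_weight_sum a b n \<ge> 0"
  using bin_weight_sum_mono[of a b 0 n] by (simp add: bin_weight_sum_def)

lemma bin_weight_sum_power2: "bin_weight_sum a b (2 ^ k) = (\<Sum>i<k. (a + b) ^ i)"
proof (induction k)
  case 0
  show ?case by (simp add: bin_weight_sum_def)
next
  case (Suc k)
  have "bin_weight_sum a b (2 ^ Suc k) = 1 + (a + b) * bin_weight_sum a b (2 ^ k)"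
    using bin_weight_sum_double[of "2 ^ k" a b] by simp
  then show ?case
    by (simp add: Suc sum_distrib_left sum.lessThan_Suc_shift del: sum.lessThan_Suc)
qed

lemma bin_weight_sum_block:
  "c \<ge> 1 \<Longrightarrow> (\<Sum>j\<in>{2^i * c..<2^i * c + 2^i}. bin_weight a b j) = (a + b) ^ i * bin_weight a b c"
proof (induction i arbitrary: c)
  case 0
  then show ?case by simp
next
  case (Suc i)
  have split: "{2^Suc i * c..<2^Suc i * c + 2^Suc i}
      = {2^i * (2*c)..<2^i * (2*c) + 2^i} \<union> {2^i * (2*c+1)..<2^i * (2*c+1) + 2^i}"
    by (auto simp: algebra_simps)
  have "(\<Sum>j\<in>{2^Suc i * c..<2^Suc i * c + 2^Suc i}. bin_weight a b j)
      = (a + b) ^ i * (bin_weight a b (2*c) + bin_weight a b (2*c+1))"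
    unfolding split distrib_left using Suc.IH[of "2*c"] Suc.IH[of "2*c+1"] Suc.prems
    by (subst sum.union_disjoint) (auto simp: add.commute)
  with bin_weight_pair[OF Suc.prems, of a b] show ?case
    by simp
qed

text \<open>The interval [n, m) lies in two consecutive aligned blocks of length 2^i.\<close>

lemma bin_weight_sum_diff_le:
  assumes "a \<ge> 0" "b \<ge> 0" "n \<le> m" "m - n \<le> 2 ^ i" "n div 2 ^ i \<ge> 1"
  shows "bin_weight_sum a b m - bin_weight_sum a b n
           \<le> (a + b) ^ i * (bin_weight a b (n div 2 ^ i) + bin_weight a b (n div 2 ^ i + 1))"
proof -
  define c where "c = n div 2 ^ i"
  have "n = 2 ^ i * c + n mod 2 ^ i" "n mod 2 ^ i < 2 ^ i"
    unfolding c_def by simp_all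
  then have "2 ^ i * c \<le> n" "n < 2 ^ i * c + 2 ^ i"
    by linarith+
  have "bin_weight_sum a b m - bin_weight_sum a b n = (\<Sum>j\<in>{n..<m}. bin_weight a b j)"
    using sum.atLeastLessThan_concat[of 0 n m "bin_weight a b"] \<open>n \<le> m\<close>
    by (simp add: bin_weight_sum_def atLeast0LessThan)
  also have "\<dots> \<le> (\<Sum>j\<in>{2^i * c..<2^i * (c + 1) + 2^i}. bin_weight a b j)"
    using \<open>2 ^ i * c \<le> n\<close> \<open>n < 2 ^ i * c + 2 ^ i\<close> \<open>m - n \<le> 2 ^ i\<close> assms(1,2)
    by (intro sum_mono2) (auto simp: bin_weight_nonneg)
  also have "\<dots> = (\<Sum>j\<in>{2^i * c..<2^i * c + 2^i}. bin_weight a b j)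
                  + (\<Sum>j\<in>{2^i * (c + 1)..<2^i * (c + 1) + 2^i}. bin_weight a b j)"
    by (subst sum.atLeastLessThan_concat[symmetric]) (auto simp: algebra_simps)
  also have "\<dots> = (a + b) ^ i * (bin_weight a b c + bin_weight a b (c + 1))"
    using bin_weight_sum_block[where c = c] bin_weight_sum_block[where c = "c + 1"] assms(5)
    unfolding c_def by (simp add: distrib_left)
  finally show ?thesis
    unfolding c_def .
qed

lemma bin_weight_sum_le_geometric:
  assumes "a \<ge> 0" "b \<ge> 0" "a + b < 1"
  shows "bin_weight_sum a b n \<le> 1 / (1 - (a + b))"
proof -
  have "bin_weight_sum a b n \<le> bin_weight_sum a b (2 ^ n)"
    using assms by (intro bin_weight_sum_mono) (auto intro: less_imp_le less_exp)
  also have "\<dots> = (1 - (a + b) ^ n) / (1 - (a + b))"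
    using assms by (simp add: bin_weight_sum_power2 sum_gp_strict)
  also have "\<dots> \<le> 1 / (1 - (a + b))"
    using assms by (intro divide_right_mono) auto
  finally show ?thesis .
qed

lemma bin_weight_sum_le_log:
  assumes "a \<ge> 0" "b \<ge> 0" "a + b = 1" "n \<ge> 1"
  shows "bin_weight_sum a b n \<le> log 2 (real n) + 1"
proof -
  obtain k where k: "2 ^ k \<le> n" "n < 2 ^ (k + 1)"
    using ex_power_ivl1[of 2 n] assms(4) by auto
  have "bin_weight_sum a b n \<le> bin_weight_sum a b (2 ^ (k + 1))"
    using assms k by (intro bin_weight_sum_mono) auto
  also have "\<dots> = real k + 1"
    using bin_weight_sum_power2[of a b "k + 1"] assms(3) by simp
  also have "real k = log 2 (real (2 ^ k))"
    by (simp add: log_nat_power)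
  also have "\<dots> \<le> log 2 (real n)"
    using k by (subst log_le_cancel_iff) (auto simp flip: of_nat_le_iff)
  finally show ?thesis
    by simp
qed


section \<open>The recurrence in closed form\<close>

lemma halving_rec_increment:
  fixes \<alpha> \<beta> c :: real and x :: "nat \<Rightarrow> real"
  assumes even: "\<And>m. m \<ge> 1 \<Longrightarrow> x (2 * m) = (\<alpha> + \<beta>) * x m + c"
    and odd: "\<And>m. m \<ge> 1 \<Longrightarrow> x (2 * m + 1) = \<alpha> * x m + \<beta> * x (m + 1) + c"
  shows "n \<ge> 1 \<Longrightarrow> x (n + 1) - x n = (x 2 - x 1) * bin_weight \<alpha> \<beta> n"
proof (induction n rule: less_induct)
  case (less n)
  show ?case
  proof (cases "n = 1")
    case True
    then show ?thesis by (simp add: numeral_2_eq_2)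
  next
    case False
    obtain m where m: "n = 2 * m \<or> n = 2 * m + 1"
      by (metis dvd_mult_div_cancel odd_two_times_div_two_succ)
    with False less.prems have "m \<ge> 1" "m < n" by auto
    with less.IH have IH: "x (m + 1) - x m = (x 2 - x 1) * bin_weight \<alpha> \<beta> m" by blast
    from m show ?thesis
    proof
      assume n: "n = 2 * m"
      have "x (n + 1) - x n = \<beta> * (x (m + 1) - x m)"
        using even[OF \<open>m \<ge> 1\<close>] odd[OF \<open>m \<ge> 1\<close>] n by (simp add: algebra_simps)
      with IH n \<open>m \<ge> 1\<close> show ?thesis by (simp add: bin_weight_even)
    next
      assume n: "n = 2 * m + 1"
      have "x (n + 1) - x n = \<alpha> * (x (m + 1) - x m)"
        using even[of "m + 1"] odd[OF \<open>m \<ge> 1\<close>] n by (simp add: algebra_simps)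
      with IH n bin_weight_odd[OF \<open>m \<ge> 1\<close>, of \<alpha> \<beta>] show ?thesis by simp
    qed
  qed
qed

lemma floor_ceiling_rec_closed_form:
  fixes \<alpha> \<beta> c :: real and x :: "nat \<Rightarrow> real"
  assumes rec: "\<forall>n\<ge>2. x n = \<alpha> * x (nat \<lfloor>real n / 2\<rfloor>) + \<beta> * x (nat \<lceil>real n / 2\<rceil>) + c"
    and "n \<ge> 1"
  shows "x n = x 1 + ((\<alpha> + \<beta> - 1) * x 1 + c) * bin_weight_sum \<alpha> \<beta> n"
proof -
  have even: "x (2 * m) = (\<alpha> + \<beta>) * x m + c" if "m \<ge> 1" for m
    using rec that by (auto simp: algebra_simps)
  have "\<lfloor>real (2 * m + 1) / 2\<rfloor> = m" "\<lceil>real (2 * m + 1) / 2\<rceil> = m + 1" for m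
    by (simp_all add: floor_eq_iff ceiling_eq_iff)
  then have odd: "x (2 * m + 1) = \<alpha> * x m + \<beta> * x (m + 1) + c" if "m \<ge> 1" for m
    using rec that by auto
  have x2: "x 2 - x 1 = (\<alpha> + \<beta> - 1) * x 1 + c"
    using even[of 1] by (simp add: numeral_2_eq_2 algebra_simps)
  show ?thesis
    using \<open>n \<ge> 1\<close>
  proof (induction n rule: dec_induct)
    case base
    show ?case by (simp add: bin_weight_sum_def)
  next
    case (step k)
    then show ?case
      using halving_rec_increment[OF even odd, of k] x2 by (simp add: bin_weight_sum_Suc algebra_simps)
  qed
qed

section \<open>Continuous periodic lifts of doubling-invariant sequences\<close>

definition dyadic_logs :: "real set" where
  "dyadic_logs = {log 2 (real n) - real k | n k. n \<ge> 1}"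

lemma closure_dyadic_logs: "closure dyadic_logs = UNIV"
proof -
  have "t \<in> closure dyadic_logs" for t
    unfolding closure_approachable
  proof (intro allI impI)
    fix e :: real
    assume "e > 0"
    have "continuous (at (2 powr t)) (log 2)"
      by (intro continuous_intros) auto
    with \<open>e > 0\<close> have "\<exists>\<delta>>0. \<forall>y. dist y (2 powr t) < \<delta> \<longrightarrow> dist (log 2 y) t < e"
      unfolding continuous_at_eps_delta by simp
    then obtain \<delta> where "\<delta> > 0" and \<delta>: "\<And>y. dist y (2 powr t) < \<delta> \<Longrightarrow> dist (log 2 y) t < e"
      by blast
    obtain k :: nat where k: "(1 / 2) ^ k < \<delta>"
      using real_arch_pow_inv[OF \<open>\<delta> > 0\<close>, of "1 / 2"] by auto
    define y where "y = 2 powr t * 2 ^ k"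
    define n where "n = nat \<lfloor>y\<rfloor> + 1"
    have "y > 0"
      unfolding y_def by simp
    then have "y < real n" "real n \<le> y + 1" "n \<ge> 1"
      unfolding n_def by linarith+
    have "real n / 2 ^ k - 2 powr t = (real n - y) / 2 ^ k"
      unfolding y_def by (simp add: field_simps)
    with \<open>y < real n\<close> have "dist (real n / 2 ^ k) (2 powr t) = (real n - y) / 2 ^ k"
      by (simp add: dist_real_def)
    also have "\<dots> \<le> (1 / 2) ^ k"
      unfolding power_one_over using \<open>real n \<le> y + 1\<close> by (intro divide_right_mono) simp_all
    finally have close: "dist (log 2 (real n / 2 ^ k)) t < e"
      using k by (intro \<delta>) linarith
    have "log 2 (real n / 2 ^ k) = log 2 (real n) - real k"
      using \<open>n \<ge> 1\<close> by (simp add: log_divide log_nat_power)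
    with close have "dist (log 2 (real n) - real k) t < e"
      by simp
    moreover have "log 2 (real n) - real k \<in> dyadic_logs"
      using \<open>n \<ge> 1\<close> unfolding dyadic_logs_def by blast
    ultimately show "\<exists>y\<in>dyadic_logs. dist y t < e"
      by blast
  qed
  then show ?thesis by blast
qed

lemma log2_power2_mult: "x > 0 \<Longrightarrow> log 2 (2 ^ k * x) = real k + log 2 x"
  by (simp add: log_mult log_nat_power)

lemma power2_mult_invariant:
  fixes f :: "nat \<Rightarrow> 'a"
  assumes "\<And>n. n \<ge> 1 \<Longrightarrow> f (2 * n) = f n" and "n \<ge> 1"
  shows "f (2 ^ k * n) = f n"
proof (induction k)
  case (Suc k)
  have "2 ^ k * n \<ge> 1"
    using \<open>n \<ge> 1\<close> by (simp add: Suc_le_eq)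
  with Suc.IH assms(1)[of "2 ^ k * n"] show ?case
    by (simp add: mult.assoc)
qed simp

text \<open>Only meaningful on dyadic_logs and for doubling-invariant f, where the choice of n does not
  matter (log2_lift_eq).\<close>

definition log2_lift :: "(nat \<Rightarrow> 'a) \<Rightarrow> real \<Rightarrow> 'a" where
  "log2_lift f t = f (SOME n. n \<ge> 1 \<and> (\<exists>k::nat. t = log 2 (real n) - real k))"

lemma log2_lift_eq:
  assumes double: "\<And>n. n \<ge> 1 \<Longrightarrow> f (2 * n) = f n" and "n \<ge> 1"
  shows "log2_lift f (log 2 (real n) - real k) = f n"
proof -
  have same: "f n' = f n" if "n' \<ge> 1" "log 2 (real n) - real k = log 2 (real n') - real k'"
    for n' k'
  proof -
    have "real (2 ^ k * n') = real (2 ^ k' * n)"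
      by (rule inj_onD[OF log_inj, of 2]) (use that \<open>n \<ge> 1\<close> in \<open>auto simp: log2_power2_mult\<close>)
    then have "2 ^ k * n' = 2 ^ k' * n"
      by (simp only: of_nat_eq_iff)
    then show ?thesis
      using power2_mult_invariant[of f, OF double] that \<open>n \<ge> 1\<close> by metis
  qed
  let ?P = "\<lambda>n'. n' \<ge> 1 \<and> (\<exists>k'::nat. log 2 (real n) - real k = log 2 (real n') - real k')"
  have "?P (SOME n'. ?P n')"
    using \<open>n \<ge> 1\<close> by (intro someI[of ?P n]) auto
  then show ?thesis
    unfolding log2_lift_def using same by blast
qed

lemma log2_lift_uniformly_continuous:
  fixes f :: "nat \<Rightarrow> real"
  assumes double: "\<And>n. n \<ge> 1 \<Longrightarrow> f (2 * n) = f n"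
    and log_uc: "\<And>e. e > 0 \<Longrightarrow> \<exists>d>0. \<forall>m n. 1 \<le> n \<longrightarrow> n \<le> m \<longrightarrow>
                   log 2 (real m) - log 2 (real n) < d \<longrightarrow> \<bar>f m - f n\<bar> < e"
  shows "uniformly_continuous_on dyadic_logs (log2_lift f)"
  unfolding uniformly_continuous_on_def
proof (intro allI impI)
  fix e :: real
  assume "e > 0"
  with log_uc obtain d where "d > 0" and d: "\<And>m n. 1 \<le> n \<Longrightarrow> n \<le> m \<Longrightarrow>
      log 2 (real m) - log 2 (real n) < d \<Longrightarrow> \<bar>f m - f n\<bar> < e"
    by blast
  have close: "\<bar>f m - f n\<bar> < e"
    if "n \<ge> 1" "m \<ge> 1" "\<bar>log 2 (real m) - log 2 (real n)\<bar> < d" for m n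
    using d[of n m] d[of m n] that by (cases "n \<le> m") (auto simp: abs_minus_commute)
  have "dist (log2_lift f t) (log2_lift f s) < e"
    if "s \<in> dyadic_logs" "t \<in> dyadic_logs" "dist t s < d" for s t
  proof -
    obtain n k where n: "n \<ge> 1" "s = log 2 (real n) - real k"
      using \<open>s \<in> dyadic_logs\<close> unfolding dyadic_logs_def by blast
    obtain m l where m: "m \<ge> 1" "t = log 2 (real m) - real l"
      using \<open>t \<in> dyadic_logs\<close> unfolding dyadic_logs_def by blast
    have s: "s = log 2 (real (2 ^ l * n)) - real (k + l)"
      and t: "t = log 2 (real (2 ^ k * m)) - real (k + l)"
      using n m by (simp_all add: log2_power2_mult)
    have "\<bar>f (2 ^ k * m) - f (2 ^ l * n)\<bar> < e"
      using n m \<open>dist t s < d\<close> unfolding s t dist_real_def by (intro close) auto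
    moreover have "2 ^ k * m \<ge> 1" "2 ^ l * n \<ge> 1"
      using n m by (simp_all add: Suc_le_eq)
    then have "log2_lift f t = f (2 ^ k * m)" "log2_lift f s = f (2 ^ l * n)"
      unfolding s t by (simp_all only: log2_lift_eq[of f, OF double])
    ultimately show ?thesis
      by (simp add: dist_real_def)
  qed
  with \<open>d > 0\<close> show "\<exists>d>0. \<forall>s\<in>dyadic_logs. \<forall>t\<in>dyadic_logs.
      dist t s < d \<longrightarrow> dist (log2_lift f t) (log2_lift f s) < e"
    by blast
qed

lemma log2_lift_shift:
  assumes double: "\<And>n. n \<ge> 1 \<Longrightarrow> f (2 * n) = f n" and "s \<in> dyadic_logs"
  shows "s + 1 \<in> dyadic_logs" "log2_lift f (s + 1) = log2_lift f s"
proof -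
  obtain n k where n: "n \<ge> 1" "s = log 2 (real n) - real k"
    using \<open>s \<in> dyadic_logs\<close> unfolding dyadic_logs_def by blast
  then have s1: "s + 1 = log 2 (real (2 * n)) - real k"
    by (simp add: log_mult)
  have "2 * n \<ge> 1"
    using n by simp
  then show "s + 1 \<in> dyadic_logs"
    unfolding s1 dyadic_logs_def by blast
  have "log2_lift f (s + 1) = f (2 * n)"
    unfolding s1 using \<open>2 * n \<ge> 1\<close> by (intro log2_lift_eq double)
  moreover have "log2_lift f s = f n"
    unfolding n(2) using n(1) by (intro log2_lift_eq double)
  ultimately show "log2_lift f (s + 1) = log2_lift f s"
    using double[OF n(1)] by simp
qed

lemma frac_log2_in_dyadic_logs: "n \<ge> 1 \<Longrightarrow> frac (log 2 (real n)) \<in> dyadic_logs"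
  unfolding dyadic_logs_def frac_def by (intro CollectI exI[of _ n] exI[of _ "nat \<lfloor>log 2 (real n)\<rfloor>"]) simp

lemma doubling_invariant_log2_periodic:
  fixes f :: "nat \<Rightarrow> real"
  assumes double: "\<And>n. n \<ge> 1 \<Longrightarrow> f (2 * n) = f n"
    and log_uc: "\<And>e. e > 0 \<Longrightarrow> \<exists>d>0. \<forall>m n. 1 \<le> n \<longrightarrow> n \<le> m \<longrightarrow>
                   log 2 (real m) - log 2 (real n) < d \<longrightarrow> \<bar>f m - f n\<bar> < e"
  shows "\<exists>\<Phi>. continuous_on UNIV \<Phi> \<and> (\<forall>t. \<Phi> (t + 1) = \<Phi> t) \<and>
           (\<forall>n\<ge>1. f n = \<Phi> (frac (log 2 (real n))))"
proof -
  have "uniformly_continuous_on dyadic_logs (log2_lift f)"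
    using assms by (rule log2_lift_uniformly_continuous)
  then obtain \<Phi> where "uniformly_continuous_on (closure dyadic_logs) \<Phi>"
    and ext: "\<And>t. t \<in> dyadic_logs \<Longrightarrow> log2_lift f t = \<Phi> t"
    and unique: "\<And>Y h t. dyadic_logs \<subseteq> Y \<Longrightarrow> Y \<subseteq> closure dyadic_logs \<Longrightarrow> continuous_on Y h \<Longrightarrow>
                   (\<And>t. t \<in> dyadic_logs \<Longrightarrow> log2_lift f t = h t) \<Longrightarrow> t \<in> Y \<Longrightarrow> h t = \<Phi> t"
    by (rule uniformly_continuous_on_extension_on_closure) blast
  then have cont: "continuous_on UNIV \<Phi>"
    using closure_dyadic_logs uniformly_continuous_imp_continuous by metis
  have "\<Phi> (t + 1) = \<Phi> t" for t
  proof (rule unique)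
    show "continuous_on UNIV (\<lambda>t. \<Phi> (t + 1))"
      by (intro continuous_on_compose2[OF cont] continuous_intros) auto
    show "log2_lift f s = \<Phi> (s + 1)" if "s \<in> dyadic_logs" for s
      using log2_lift_shift[of f, OF double that] ext by metis
  qed (simp_all add: closure_dyadic_logs)
  moreover have "f n = \<Phi> (frac (log 2 (real n)))" if "n \<ge> 1" for n
    using ext[OF frac_log2_in_dyadic_logs[OF that]] log2_lift_eq[of f, OF double that, of "nat \<lfloor>log 2 (real n)\<rfloor>"]
      that by (simp add: frac_def)
  ultimately show ?thesis
    using cont by blast
qed


section \<open>Weight sums when a + b > 1\<close>

lemma power2_powr_log2:
  assumes "l > 0"
  shows "(2 ^ i :: real) powr log 2 l = l ^ i"
proof -
  have "(2 ^ i :: real) powr log 2 l = (2 powr log 2 l) ^ i"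
    by (simp add: powr_realpow [symmetric] powr_powr powr_power mult.commute)
  then show ?thesis
    using assms by simp
qed

locale supercritical_weights =
  fixes a b :: real
  assumes a_pos: "a > 0" and b_pos: "b > 0" and sum_gt_1: "a + b > 1"
begin

abbreviation \<rho> :: real where "\<rho> \<equiv> log 2 (a + b)"

abbreviation \<theta> :: real where "\<theta> \<equiv> max a b / (a + b)"

lemma \<rho>_pos: "\<rho> > 0"
  using sum_gt_1 by simp

lemma \<theta>_nonneg: "\<theta> \<ge> 0"
  using a_pos b_pos by simp

lemma powr_\<rho>_half: "x \<ge> 0 \<Longrightarrow> (x / 2) powr \<rho> = x powr \<rho> / (a + b)"
  using a_pos b_pos by (simp add: powr_divide)

lemma powr_\<rho>_mult_power2: "real (2 ^ i * c) powr \<rho> = (a + b) ^ i * real c powr \<rho>"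
  using a_pos b_pos by (simp add: powr_mult power2_powr_log2)

text \<open>Each of the K leading binary digits below the top one contributes a factor of at most
  max a b instead of a + b.\<close>

lemma bin_weight_le_powr: "2 ^ K \<le> n \<Longrightarrow> bin_weight a b n \<le> \<theta> ^ K * real n powr \<rho>"
proof (induction n arbitrary: K rule: less_induct)
  case (less n)
  show ?case
  proof (cases "n \<ge> 2")
    case False
    with less.prems have "n = 1"
      using one_le_power[of "2::nat" K] by linarith
    moreover from this less.prems have "K = 0"
      using power_increasing_iff[of "2::nat" K 0] by simp
    ultimately show ?thesis by simp
  next
    case True
    define c where "c = (if even n then b else a)"
    have "2 ^ (K - 1) \<le> n div 2"
      using less.prems True by (cases K) (auto simp: div_le_mono)
    with True less.IH have "bin_weight a b (n div 2) \<le> \<theta> ^ (K - 1) * real (n div 2) powr \<rho>"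
      by simp
    also have "\<dots> \<le> \<theta> ^ (K - 1) * (real n powr \<rho> / (a + b))"
      using \<rho>_pos \<theta>_nonneg
      by (auto simp flip: powr_\<rho>_half intro!: mult_left_mono powr_mono2 simp: real_of_nat_div)
    finally have IH: "bin_weight a b (n div 2) \<le> \<theta> ^ (K - 1) * (real n powr \<rho> / (a + b))" .
    have c_le: "c * \<theta> ^ (K - 1) \<le> (a + b) * \<theta> ^ K"
    proof (cases K)
      case 0
      then show ?thesis unfolding c_def using a_pos b_pos by simp
    next
      case (Suc K')
      have "c \<le> (a + b) * \<theta>"
        unfolding c_def using a_pos b_pos by simp
      then show ?thesis
        using mult_right_mono[of c "(a + b) * \<theta>" "\<theta> ^ K'"] Suc \<theta>_nonneg sum_gt_1
        by (simp add: mult.assoc)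
    qed
    have "bin_weight a b n = c * bin_weight a b (n div 2)"
      unfolding c_def using True by (subst bin_weight.simps) simp
    also have "\<dots> \<le> c * (\<theta> ^ (K - 1) * (real n powr \<rho> / (a + b)))"
      using IH a_pos b_pos unfolding c_def by (intro mult_left_mono) auto
    also have "\<dots> \<le> (a + b) * \<theta> ^ K * (real n powr \<rho> / (a + b))"
      using mult_right_mono[OF c_le, of "real n powr \<rho> / (a + b)"] a_pos b_pos
      by (simp add: mult.assoc)
    finally show ?thesis
      using a_pos b_pos by simp
  qed
qed

lemma bin_weight_pair_le_powr:
  assumes "2 ^ K \<le> c"
  shows "bin_weight a b c + bin_weight a b (c + 1) \<le> (1 + (a + b)) * \<theta> ^ K * real c powr \<rho>"
proof -
  have "c \<ge> 1"
    using assms one_le_power[of "2::nat" K] by linarith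
  have "bin_weight a b (c + 1) \<le> \<theta> ^ K * real (c + 1) powr \<rho>"
    using assms by (intro bin_weight_le_powr) simp
  also have "\<dots> \<le> \<theta> ^ K * real (2 ^ 1 * c) powr \<rho>"
    using \<open>c \<ge> 1\<close> \<theta>_nonneg \<rho>_pos by (intro mult_left_mono powr_mono2) auto
  finally have "bin_weight a b (c + 1) \<le> \<theta> ^ K * ((a + b) * real c powr \<rho>)"
    using powr_\<rho>_mult_power2[of 1 c] by simp
  with bin_weight_le_powr[OF assms] show ?thesis
    by (simp add: algebra_simps)
qed

text \<open>The shift 1/(a + b - 1) turns S(2n) = 1 + (a + b) S(n) into exact homogeneity.\<close>

definition shifted_sum :: "nat \<Rightarrow> real" where
  "shifted_sum n = bin_weight_sum a b n + 1 / (a + b - 1)"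

lemma shifted_sum_double: "n \<ge> 1 \<Longrightarrow> shifted_sum (2 * n) = (a + b) * shifted_sum n"
  using bin_weight_sum_double[of n a b] sum_gt_1 unfolding shifted_sum_def by (simp add: field_simps)

lemma shifted_sum_mono: "n \<le> m \<Longrightarrow> shifted_sum n \<le> shifted_sum m"
  using bin_weight_sum_mono[of a b n m] a_pos b_pos by (simp add: shifted_sum_def)

lemma shifted_sum_pos: "shifted_sum n > 0"
  using bin_weight_sum_nonneg[of a b n] a_pos b_pos sum_gt_1
  by (simp add: shifted_sum_def add_nonneg_pos)

lemma shifted_sum_le: "n \<ge> 1 \<Longrightarrow> shifted_sum n \<le> (a + b) / (a + b - 1) * real n powr \<rho>"
proof -
  assume "n \<ge> 1"
  then obtain k where k: "2 ^ k \<le> n" "n < 2 ^ (k + 1)"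
    using ex_power_ivl1[of 2 n] by auto
  have "(a + b) ^ k = real (2 ^ k) powr \<rho>"
    using a_pos b_pos by (simp add: power2_powr_log2)
  also have "\<dots> \<le> real n powr \<rho>"
    using k \<rho>_pos by (intro powr_mono2) auto
  finally have "(a + b) ^ k \<le> real n powr \<rho>" .
  have "shifted_sum n \<le> shifted_sum (2 ^ (k + 1))"
    using k by (intro shifted_sum_mono) simp
  also have "\<dots> = (a + b) / (a + b - 1) * (a + b) ^ k"
    using bin_weight_sum_power2[of a b "k + 1"] sum_gt_1 unfolding shifted_sum_def
    by (simp add: sum_gp_strict field_simps)
  also have "\<dots> \<le> (a + b) / (a + b - 1) * real n powr \<rho>"
    using \<open>(a + b) ^ k \<le> real n powr \<rho>\<close> sum_gt_1 by (intro mult_left_mono) auto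
  finally show ?thesis .
qed

lemma shifted_sum_diff_le_aligned:
  assumes "n \<le> m" "m - n \<le> 2 ^ i" "2 ^ K * 2 ^ i \<le> n"
  shows "shifted_sum m - shifted_sum n \<le> (1 + (a + b)) * \<theta> ^ K * real n powr \<rho>"
proof -
  define c where "c = n div 2 ^ i"
  have "2 ^ K \<le> c"
    using assms(3) unfolding c_def by (simp add: less_eq_div_iff_mult_less_eq)
  then have "c \<ge> 1"
    using one_le_power[of "2::nat" K] by linarith
  have "real (2 ^ i * c) \<le> real n"
    unfolding c_def of_nat_le_iff by (simp add: div_times_less_eq_dividend mult.commute)
  then have scale: "(a + b) ^ i * real c powr \<rho> \<le> real n powr \<rho>"
    unfolding powr_\<rho>_mult_power2[symmetric] using \<rho>_pos by (intro powr_mono2) auto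
  have "shifted_sum m - shifted_sum n = bin_weight_sum a b m - bin_weight_sum a b n"
    by (simp add: shifted_sum_def)
  also have "\<dots> \<le> (a + b) ^ i * (bin_weight a b c + bin_weight a b (c + 1))"
    unfolding c_def using a_pos b_pos assms(1,2) \<open>c \<ge> 1\<close>
    by (intro bin_weight_sum_diff_le) (auto simp: c_def)
  also have "\<dots> \<le> (a + b) ^ i * ((1 + (a + b)) * \<theta> ^ K * real c powr \<rho>)"
    using bin_weight_pair_le_powr[OF \<open>2 ^ K \<le> c\<close>] a_pos b_pos by (intro mult_left_mono) auto
  also have "\<dots> = (1 + (a + b)) * \<theta> ^ K * ((a + b) ^ i * real c powr \<rho>)"
    by (simp add: algebra_simps)
  also have "\<dots> \<le> (1 + (a + b)) * \<theta> ^ K * real n powr \<rho>"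
    using scale \<theta>_nonneg a_pos b_pos by (intro mult_left_mono) auto
  finally show ?thesis .
qed

lemma shifted_sum_diff_le:
  assumes "n \<le> m" "2 ^ (K + 1) * (m - n) \<le> n"
  shows "shifted_sum m - shifted_sum n \<le> (1 + (a + b)) * \<theta> ^ K * real n powr \<rho>"
proof (cases "m = n")
  case True
  then show ?thesis
    using a_pos b_pos by simp
next
  case False
  with \<open>n \<le> m\<close> have "m - n \<ge> 1"
    by simp
  then obtain j where j: "2 ^ j \<le> m - n" "m - n < 2 ^ (j + 1)"
    using ex_power_ivl1[of 2 "m - n"] by auto
  have "2 ^ K * 2 ^ (j + 1) = 2 ^ (K + 1) * (2 ^ j :: nat)"
    by simp
  also have "\<dots> \<le> n"
    using j assms(2) by (meson le_trans mult_le_mono2)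
  finally show ?thesis
    using j assms(1) by (intro shifted_sum_diff_le_aligned[of _ _ "j + 1"]) auto
qed

definition normalized_sum :: "nat \<Rightarrow> real" where
  "normalized_sum n = shifted_sum n / real n powr \<rho>"

lemma normalized_sum_double: "n \<ge> 1 \<Longrightarrow> normalized_sum (2 * n) = normalized_sum n"
  using powr_\<rho>_mult_power2[of 1 n] shifted_sum_double[of n] a_pos b_pos
  by (simp add: normalized_sum_def)

lemma normalized_sum_increase_le:
  assumes "1 \<le> n" "n \<le> m" "2 ^ (K + 1) * (m - n) \<le> n"
  shows "normalized_sum m - normalized_sum n \<le> (1 + (a + b)) * \<theta> ^ K"
proof -
  define N where "N = real n powr \<rho>"
  have "N > 0"
    unfolding N_def using assms(1) by simp
  have "N \<le> real m powr \<rho>"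
    unfolding N_def using assms(2) \<rho>_pos by (intro powr_mono2) auto
  have "normalized_sum m - normalized_sum n \<le> (shifted_sum m - shifted_sum n) / N"
    unfolding normalized_sum_def N_def[symmetric]
    using shifted_sum_pos[of m] \<open>N > 0\<close> \<open>N \<le> real m powr \<rho>\<close> by (simp add: frac_le diff_divide_distrib)
  also have "\<dots> \<le> (1 + (a + b)) * \<theta> ^ K"
    using shifted_sum_diff_le[OF assms(2,3)] \<open>N > 0\<close> unfolding N_def by (simp add: divide_le_eq)
  finally show ?thesis .
qed

lemma normalized_sum_decrease_le:
  assumes "1 \<le> n" "n \<le> m" "y \<ge> 0" "real m powr \<rho> \<le> (1 + y) * real n powr \<rho>"
  shows "normalized_sum n - normalized_sum m \<le> (a + b) / (a + b - 1) * y"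
proof -
  define N where "N = real n powr \<rho>"
  define M where "M = real m powr \<rho>"
  have "N > 0"
    unfolding N_def using assms(1) by simp
  have "N \<le> M"
    unfolding N_def M_def using assms(2) \<rho>_pos by (intro powr_mono2) auto
  have "M - N \<le> y * M"
    using assms(4) mult_left_mono[OF \<open>N \<le> M\<close> \<open>y \<ge> 0\<close>] unfolding N_def M_def
    by (simp add: algebra_simps)
  then have "(M - N) / M \<le> y"
    using \<open>N > 0\<close> \<open>N \<le> M\<close> by (simp add: divide_le_eq)
  have "normalized_sum n - normalized_sum m \<le> shifted_sum n / N - shifted_sum n / M"
    unfolding normalized_sum_def N_def[symmetric] M_def[symmetric]
    using shifted_sum_mono[OF assms(2)] \<open>N > 0\<close> \<open>N \<le> M\<close> by (simp add: divide_right_mono)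
  also have "\<dots> = shifted_sum n * ((M - N) / M) / N"
    using \<open>N > 0\<close> \<open>N \<le> M\<close> by (simp add: field_simps)
  also have "\<dots> \<le> shifted_sum n * y / N"
    using \<open>(M - N) / M \<le> y\<close> shifted_sum_pos[of n] \<open>N > 0\<close>
    by (intro divide_right_mono mult_left_mono) auto
  also have "\<dots> \<le> (a + b) / (a + b - 1) * N * y / N"
    using shifted_sum_le[OF assms(1)] \<open>N > 0\<close> \<open>y \<ge> 0\<close> unfolding N_def
    by (intro divide_right_mono mult_right_mono) auto
  also have "\<dots> = (a + b) / (a + b - 1) * y"
    using \<open>N > 0\<close> by simp
  finally show ?thesis .
qed

lemma normalized_sum_diff_le:
  assumes "1 \<le> n" "n \<le> m" "real m \<le> (1 + (1 / 2) ^ (K + 1)) * real n"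
  shows "\<bar>normalized_sum m - normalized_sum n\<bar> \<le> (1 + (a + b)) * \<theta> ^ K
           + (a + b) / (a + b - 1) * ((1 + (1 / 2) ^ (K + 1)) powr \<rho> - 1)"
proof -
  define y where "y = (1 + (1 / 2) ^ (K + 1)) powr \<rho> - 1"
  have "y \<ge> 0"
    unfolding y_def using \<rho>_pos by (simp add: ge_one_powr_ge_zero)
  have "real m powr \<rho> \<le> ((1 + (1 / 2) ^ (K + 1)) * real n) powr \<rho>"
    using assms(3) \<rho>_pos by (intro powr_mono2) auto
  also have "\<dots> = (1 + y) * real n powr \<rho>"
    unfolding y_def by (simp add: powr_mult)
  finally have down: "normalized_sum n - normalized_sum m \<le> (a + b) / (a + b - 1) * y"
    using assms(1,2) \<open>y \<ge> 0\<close> by (intro normalized_sum_decrease_le)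
  have "real (2 ^ (K + 1) * (m - n)) \<le> real n"
    using assms(2,3) by (simp add: of_nat_diff field_simps)
  then have up: "normalized_sum m - normalized_sum n \<le> (1 + (a + b)) * \<theta> ^ K"
    using assms(1,2) by (intro normalized_sum_increase_le) (simp_all only: of_nat_le_iff)
  have "0 \<le> (1 + (a + b)) * \<theta> ^ K" "0 \<le> (a + b) / (a + b - 1) * y"
    using a_pos b_pos sum_gt_1 \<open>y \<ge> 0\<close> by auto
  with up down show ?thesis
    unfolding y_def by linarith
qed

lemma normalized_sum_log2_uniform:
  assumes "e > 0"
  shows "\<exists>d>0. \<forall>m n. 1 \<le> n \<longrightarrow> n \<le> m \<longrightarrow> log 2 (real m) - log 2 (real n) < d \<longrightarrow>
           \<bar>normalized_sum m - normalized_sum n\<bar> < e"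
proof -
  define bound where "bound K = (1 + (a + b)) * \<theta> ^ K
    + (a + b) / (a + b - 1) * ((1 + (1 / 2) ^ (K + 1)) powr \<rho> - 1)" for K
  have theta_power: "(\<lambda>K. \<theta> ^ K) \<longlonglongrightarrow> 0"
    using a_pos b_pos by (intro LIMSEQ_power_zero) simp
  have half_power: "(\<lambda>K. (1 / 2 :: real) ^ (K + 1)) \<longlonglongrightarrow> 0"
    by (intro LIMSEQ_ignore_initial_segment LIMSEQ_power_zero) simp
  have "bound \<longlonglongrightarrow> (1 + (a + b)) * 0 + (a + b) / (a + b - 1) * ((1 + 0) powr \<rho> - 1)"
    unfolding bound_def
    by (intro tendsto_add tendsto_mult tendsto_diff tendsto_powr tendsto_const theta_power half_power) simp
  then have "bound \<longlonglongrightarrow> 0"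
    by simp
  with \<open>e > 0\<close> obtain K where K: "bound K < e"
    using order_tendstoD(2) eventually_sequentially by (metis order_refl)
  define q :: real where "q = 1 + (1 / 2) ^ (K + 1)"
  define d where "d = log 2 q"
  have "q > 1"
    unfolding q_def by simp
  then have "d > 0"
    unfolding d_def by simp
  have "\<bar>normalized_sum m - normalized_sum n\<bar> < e"
    if "1 \<le> n" "n \<le> m" "log 2 (real m) - log 2 (real n) < d" for m n
  proof -
    have "real m = 2 powr log 2 (real m)"
      using that by simp
    also have "\<dots> \<le> 2 powr (log 2 (real n) + d)"
      using that by (intro powr_mono) auto
    also have "\<dots> = q * real n"
      using that \<open>q > 1\<close> unfolding d_def by (simp add: powr_add)
    finally have "real m \<le> (1 + (1 / 2) ^ (K + 1)) * real n"
      unfolding q_def .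
    with that(1,2) have "\<bar>normalized_sum m - normalized_sum n\<bar> \<le> bound K"
      unfolding bound_def by (rule normalized_sum_diff_le)
    with K show ?thesis by linarith
  qed
  with \<open>d > 0\<close> show ?thesis
    by blast
qed

theorem shifted_sum_periodic:
  "\<exists>\<Psi>. continuous_on UNIV \<Psi> \<and> (\<forall>t. \<Psi> (t + 1) = \<Psi> t) \<and>
     (\<forall>n\<ge>1. shifted_sum n = real n powr \<rho> * \<Psi> (frac (log 2 (real n))))"
proof -
  obtain \<Psi> where "continuous_on UNIV \<Psi>" "\<forall>t. \<Psi> (t + 1) = \<Psi> t"
    and \<Psi>: "\<forall>n\<ge>1. normalized_sum n = \<Psi> (frac (log 2 (real n)))"
    using doubling_invariant_log2_periodic[of normalized_sum]
      normalized_sum_double normalized_sum_log2_uniform by blast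
  moreover have "shifted_sum n = real n powr \<rho> * normalized_sum n" if "n \<ge> 1" for n
    using that by (simp add: normalized_sum_def)
  ultimately show ?thesis
    by auto
qed

end

section \<open>Asymptotics of the solutions\<close>

lemma eventually_ln_ge_1: "\<forall>\<^sub>F n in at_top. 1 \<le> ln (real n)"
  unfolding eventually_at_top_linorder
proof (intro exI[of _ 3] allI impI)
  fix n :: nat
  assume "n \<ge> 3"
  have "exp 1 \<le> real n"
    using exp_le \<open>n \<ge> 3\<close> by linarith
  then show "1 \<le> ln (real n)"
    using \<open>n \<ge> 3\<close> by (subst ln_ge_iff) auto
qed

lemma const_bigo_eventually_ge_1:
  fixes f :: "nat \<Rightarrow> real"
  assumes "\<forall>\<^sub>F n in at_top. 1 \<le> f n"
  shows "(\<lambda>_. c) \<in> O(f)"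
proof (rule bigoI[of _ "\<bar>c\<bar>"])
  show "\<forall>\<^sub>F n in at_top. norm c \<le> \<bar>c\<bar> * norm (f n)"
    using assms by eventually_elim (simp add: mult_le_cancel_left1 abs_ge_self order_trans)
qed

lemma const_bigo_powr_ln_power:
  fixes E :: real and p :: nat
  assumes "E \<ge> 0"
  shows "(\<lambda>_. c) \<in> O(\<lambda>n. real n powr E * ln (real n) ^ p)"
proof (rule const_bigo_eventually_ge_1)
  show "\<forall>\<^sub>F n in at_top. 1 \<le> real n powr E * ln (real n) ^ p"
    using eventually_ln_ge_1 eventually_ge_at_top[of "1::nat"]
  proof eventually_elim
    case (elim n)
    then have "1 \<le> real n powr E" "1 \<le> ln (real n) ^ p"
      using assms by (auto intro: ge_one_powr_ge_zero one_le_power)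
    then show ?case
      using mult_mono[of 1 _ 1] by force
  qed
qed

lemma floor_ceiling_rec_supercritical:
  fixes \<alpha> \<beta> c :: real and x :: "nat \<Rightarrow> real"
  assumes "\<alpha> > 0" "\<beta> > 0" "\<alpha> + \<beta> > 1"
    and rec: "\<forall>n\<ge>2. x n = \<alpha> * x (nat \<lfloor>real n / 2\<rfloor>) + \<beta> * x (nat \<lceil>real n / 2\<rceil>) + c"
  shows "\<exists>\<Phi>. continuous_on UNIV \<Phi> \<and> (\<forall>t. \<Phi> (t + 1) = \<Phi> t) \<and>
           (\<forall>n\<ge>1. x n = real n powr log 2 (\<alpha> + \<beta>) * \<Phi> (frac (log 2 (real n))) - c / (\<alpha> + \<beta> - 1))"
proof -
  interpret supercritical_weights \<alpha> \<beta>
    using assms(1-3) by unfold_locales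
  obtain \<Psi> where "continuous_on UNIV \<Psi>" "\<forall>t. \<Psi> (t + 1) = \<Psi> t"
    and \<Psi>: "\<forall>n\<ge>1. shifted_sum n = real n powr \<rho> * \<Psi> (frac (log 2 (real n)))"
    using shifted_sum_periodic by blast
  define D where "D = (\<alpha> + \<beta> - 1) * x 1 + c"
  have "x n = real n powr \<rho> * (D * \<Psi> (frac (log 2 (real n)))) - c / (\<alpha> + \<beta> - 1)" if "n \<ge> 1" for n
  proof -
    have "x 1 = (D - c) / (\<alpha> + \<beta> - 1)"
      using sum_gt_1 by (simp add: D_def)
    then have "x n = D * shifted_sum n - c / (\<alpha> + \<beta> - 1)"
      unfolding floor_ceiling_rec_closed_form[OF rec that, folded D_def] shifted_sum_def
      by (simp add: algebra_simps diff_divide_distrib)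
    with \<Psi> that show ?thesis
      by simp
  qed
  moreover have "continuous_on UNIV (\<lambda>t. D * \<Psi> t)"
    by (intro continuous_intros) fact
  ultimately show ?thesis
    using \<open>\<forall>t. \<Psi> (t + 1) = \<Psi> t\<close> by (intro exI[of _ "\<lambda>t. D * \<Psi> t"]) simp
qed

lemma floor_ceiling_rec_subcritical:
  fixes \<alpha> \<beta> c :: real and x :: "nat \<Rightarrow> real"
  assumes "\<alpha> > 0" "\<beta> > 0" "\<alpha> + \<beta> \<le> 1"
    and rec: "\<forall>n\<ge>2. x n = \<alpha> * x (nat \<lfloor>real n / 2\<rfloor>) + \<beta> * x (nat \<lceil>real n / 2\<rceil>) + c"
  shows "x \<in> O(\<lambda>n. ln (real n) ^ (if \<alpha> + \<beta> = 1 \<and> c \<noteq> 0 then 1 else 0))"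
proof -
  define D where "D = (\<alpha> + \<beta> - 1) * x 1 + c"
  have "\<forall>\<^sub>F n in at_top. x n = x 1 + D * bin_weight_sum \<alpha> \<beta> n"
    using eventually_ge_at_top[of "1::nat"]
    by eventually_elim (unfold D_def, rule floor_ceiling_rec_closed_form[OF rec])
  then have x: "x \<in> O(g) \<longleftrightarrow> (\<lambda>n. x 1 + D * bin_weight_sum \<alpha> \<beta> n) \<in> O(g)" for g
    by (rule landau_o.big.in_cong)
  consider (log) "\<alpha> + \<beta> = 1" "c \<noteq> 0" | (const) "\<alpha> + \<beta> = 1" "c = 0" | (geometric) "\<alpha> + \<beta> < 1"
    using assms(3) by linarith
  then show ?thesis
  proof cases
    case log
    have "\<forall>\<^sub>F n in at_top. norm (bin_weight_sum \<alpha> \<beta> n) \<le> (1 / ln 2 + 1) * norm (ln (real n))"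
      using eventually_ln_ge_1 eventually_ge_at_top[of "1::nat"]
    proof eventually_elim
      case (elim n)
      have "bin_weight_sum \<alpha> \<beta> n \<le> ln (real n) / ln 2 + 1"
        using bin_weight_sum_le_log[of \<alpha> \<beta> n] assms log elim by (simp add: log_def)
      also have "\<dots> \<le> (1 / ln 2 + 1) * ln (real n)"
        using elim by (simp add: algebra_simps)
      finally show ?case
        using bin_weight_sum_nonneg[of \<alpha> \<beta> n] assms elim by simp
    qed
    then have "bin_weight_sum \<alpha> \<beta> \<in> O(\<lambda>n. ln (real n))"
      by (rule bigoI)
    moreover have "(\<lambda>_. x 1) \<in> O(\<lambda>n. ln (real n))"
      using eventually_ln_ge_1 by (rule const_bigo_eventually_ge_1)
    ultimately show ?thesis
      using log x by (simp add: sum_in_bigo)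
  next
    case const
    then show ?thesis
      using x const_bigo_eventually_ge_1[of "\<lambda>_. 1" "x 1"] by (simp add: D_def)
  next
    case geometric
    have "\<forall>\<^sub>F n in at_top. norm (bin_weight_sum \<alpha> \<beta> n) \<le> 1 / (1 - (\<alpha> + \<beta>)) * norm (1 :: real)"
      using bin_weight_sum_le_geometric[of \<alpha> \<beta>] bin_weight_sum_nonneg[of \<alpha> \<beta>] assms geometric
      by simp
    then have "bin_weight_sum \<alpha> \<beta> \<in> O(\<lambda>_. 1)"
      by (rule bigoI)
    moreover have "(\<lambda>_::nat. x 1) \<in> O(\<lambda>_. 1 :: real)"
      by (rule const_bigo_eventually_ge_1) simp
    ultimately show ?thesis
      using geometric x by (simp add: sum_in_bigo)
  qed
qed

theorem mainTheorem5:
  fixes \<alpha> \<beta> c0 :: real and g x :: "nat \<Rightarrow> real"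
  assumes "\<alpha> > 0" and "\<beta> > 0"
    and g_const: "\<forall>n. g n = c0"
    and rec: "\<forall>n\<ge>2. x n = \<alpha> * x (nat \<lfloor>real n / 2\<rfloor>) + \<beta> * x (nat \<lceil>real n / 2\<rceil>) + g n"
  shows "\<exists>\<Phi> :: real \<Rightarrow> real. continuous_on UNIV \<Phi> \<and> (\<forall>t. \<Phi> (t + 1) = \<Phi> t) \<and>
    ((rec_d0 \<beta> g (x 1) = 0 \<and> rec_d1 \<beta> g (x 1) = 0) \<longrightarrow>
       (\<forall>\<^sub>F n in at_top. x n = real n powr log 2 (\<alpha> + \<beta>) * \<Phi> (frac (log 2 (real n))))) \<and>
    ((rec_d0 \<beta> g (x 1) \<noteq> 0 \<or> rec_d1 \<beta> g (x 1) \<noteq> 0) \<and> \<alpha> + \<beta> > 1 \<longrightarrow>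
       (\<forall>\<epsilon>>0. (\<lambda>n. x n - real n powr log 2 (\<alpha> + \<beta>) * \<Phi> (frac (log 2 (real n))))
          \<in> O(\<lambda>n. real n powr (log 2 (max (max \<alpha> \<beta>) 1) + (if max \<alpha> \<beta> = 1 then \<epsilon> else 0))
                 * ln (real n) ^ (if max \<alpha> \<beta> < 1 then 1 else 0)))) \<and>
    ((rec_d0 \<beta> g (x 1) \<noteq> 0 \<or> rec_d1 \<beta> g (x 1) \<noteq> 0) \<and> \<alpha> + \<beta> \<le> 1 \<longrightarrow>
       x \<in> O(\<lambda>n. ln (real n) ^ (if \<alpha> + \<beta> = 1 \<and> rec_d0 \<beta> g (x 1) + rec_d1 \<beta> g (x 1) \<noteq> 0 then 1 else 0)))"
proof -
  have rec_c0: "\<forall>n\<ge>2. x n = \<alpha> * x (nat \<lfloor>real n / 2\<rfloor>) + \<beta> * x (nat \<lceil>real n / 2\<rceil>) + c0"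
    using rec g_const by simp
  have d0: "rec_d0 \<beta> g (x 1) = (1 - \<beta>) * x 1" and d1: "rec_d1 \<beta> g (x 1) = c0 - (1 - \<beta>) * x 1"
    using g_const by (simp_all add: rec_d0_def rec_d1_def)
  show ?thesis
  proof (cases "\<alpha> + \<beta> > 1")
    case True
    then obtain \<Phi> where \<Phi>: "continuous_on UNIV \<Phi>" "\<forall>t. \<Phi> (t + 1) = \<Phi> t"
      and x: "\<forall>n\<ge>1. x n = real n powr log 2 (\<alpha> + \<beta>) * \<Phi> (frac (log 2 (real n))) - c0 / (\<alpha> + \<beta> - 1)"
      using floor_ceiling_rec_supercritical[OF assms(1,2) _ rec_c0] by blast
    have error: "\<forall>\<^sub>F n in at_top.
        x n - real n powr log 2 (\<alpha> + \<beta>) * \<Phi> (frac (log 2 (real n))) = - c0 / (\<alpha> + \<beta> - 1)"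
      using eventually_ge_at_top[of "1::nat"] by eventually_elim (simp add: x)
    have "(\<lambda>n. x n - real n powr log 2 (\<alpha> + \<beta>) * \<Phi> (frac (log 2 (real n))))
            \<in> O(\<lambda>n. real n powr E * ln (real n) ^ p)" if "E \<ge> 0" for E p
      using landau_o.big.in_cong[OF error] const_bigo_powr_ln_power[OF that] by simp
    with \<Phi> error d0 d1 True show ?thesis
      by (intro exI[of _ \<Phi>]) (auto elim: eventually_mono)
  next
    case False
    have "\<forall>\<^sub>F n in at_top. x n = 0" if "c0 = 0" "(1 - \<beta>) * x 1 = 0"
      using eventually_ge_at_top[of "1::nat"]
    proof eventually_elim
      case (elim n)
      show ?case
        using floor_ceiling_rec_closed_form[OF rec_c0 elim] that assms(1) False by simp
    qed
    moreover have "x \<in> O(\<lambda>n. ln (real n) ^ (if \<alpha> + \<beta> = 1 \<and> c0 \<noteq> 0 then 1 else 0))"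
      using False assms(1,2) rec_c0 by (intro floor_ceiling_rec_subcritical) auto
    ultimately show ?thesis
      using False d0 d1 by (intro exI[of _ "\<lambda>_. 0"]) auto
  qed
qed

end
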